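(* Let $f_1,\ldots,f_k:\mathbb{R}^n\to\Delta^n$ be the conversion functions of $k$ lossless (resp. finitely lossless) learning dynamics over $n$ actions, and let $\alpha_1,\ldots,\alpha_k\ge 0$ with $\sum_{\ell=1}^k\alpha_\ell=1$. Then the learning dynamic with conversion function $\sum_{\ell=1}^k\alpha_\ell f_\ell$ (the convex combination of the $k$ dynamics with parameters $\alpha_1,\ldots,\alpha_k$) is lossless (resp. finitely lossless).
   Context: $\Delta^n=\{\mathbf{x}\in\mathbb{R}^n: x_j\ge 0,\ \sum_j x_j=1\}$; $\mathbf{e}_j$ is the $j$-th standard basis vector. A learning dynamic over $n$ actions is specified by a conversion function $f:\mathbb{R}^n\to\Delta^n$: given an initial state $\mathbf{q}^0\in\mathbb{R}^n$ and an input function $\mathbf{p}:[0,\infty)\to\mathbb{R}^n$ square integrable on bounded intervals, the state is $\mathbf{q}(t)=\mathbf{q}^0+\int_0^t\mathbf{p}(\tau)\,d\tau$ and the strategy is $\mathbf{x}(t)=f(\mathbf{q}(t))$. The learning operator with shift $\mathbf{x}^*\in\mathbb{R}^n$ has state $\mathbf{q}$, input $\mathbf{p}$, output $\mathbf{x}-\mathbf{x}^*$; it is lossless via a storage function $L:\mathbb{R}^n\to\mathbb{R}$ if for every $\mathbf{q}^0$, every $\mathbf{p}$ and every $t\ge0$, $L(\mathbf{q}(t))=L(\mathbf{q}^0)+\int_0^t\langle\mathbf{p}(\tau),\mathbf{x}(\tau)-\mathbf{x}^*\rangle\,d\tau$, and finitely lossless if lossless via a storage function bounded from below. A learning dynamic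 is lossless if its learning operator with any shift is lossless; it is finitely lossless if for every action $j$ its learning operator with shift $\mathbf{e}_j$ is finitely lossless. *)

theory Defs
  imports "HOL-Analysis.Analysis"
begin

definition prob_simplex :: "(real^'n) set" where
  "prob_simplex = {x. (\<forall>j. 0 \<le> x $ j) \<and> (\<Sum>j\<in>UNIV. x $ j) = 1}"

definition conversion_function :: "(real^'n \<Rightarrow> real^'n) \<Rightarrow> bool" where
  "conversion_function f \<longleftrightarrow> (\<forall>q. f q \<in> prob_simplex)"

definition admissible_input :: "(real \<Rightarrow> real^'n) \<Rightarrow> bool" where
  "admissible_input p \<longleftrightarrow>
     (\<forall>t\<ge>0. set_borel_measurable lborel {0..t} p \<and>
             set_integrable lborel {0..t} (\<lambda>\<tau>. (norm (p \<tau>))\<^sup>2))"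

definition state :: "real^'n \<Rightarrow> (real \<Rightarrow> real^'n) \<Rightarrow> real \<Rightarrow> real^'n" where
  "state q0 p t = q0 + (LINT \<tau>:{0..t}|lborel. p \<tau>)"

definition lossless_via ::
  "(real^'n \<Rightarrow> real^'n) \<Rightarrow> real^'n \<Rightarrow> (real^'n \<Rightarrow> real) \<Rightarrow> bool" where
  "lossless_via f xs L \<longleftrightarrow>
     (\<forall>q0 p t. admissible_input p \<and> 0 \<le> t \<longrightarrow>
        set_integrable lborel {0..t} (\<lambda>\<tau>. p \<tau> \<bullet> (f (state q0 p \<tau>) - xs)) \<and>
        L (state q0 p t) = L q0 + (LINT \<tau>:{0..t}|lborel. p \<tau> \<bullet> (f (state q0 p \<tau>) - xs)))"

definition lossless_operator :: "(real^'n \<Rightarrow> real^'n) \<Rightarrow> real^'n \<Rightarrow> bool" where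
  "lossless_operator f xs \<longleftrightarrow> (\<exists>L. lossless_via f xs L)"

definition finitely_lossless_operator :: "(real^'n \<Rightarrow> real^'n) \<Rightarrow> real^'n \<Rightarrow> bool" where
  "finitely_lossless_operator f xs \<longleftrightarrow> (\<exists>L. bdd_below (range L) \<and> lossless_via f xs L)"

definition lossless_dynamic :: "(real^'n \<Rightarrow> real^'n) \<Rightarrow> bool" where
  "lossless_dynamic f \<longleftrightarrow> (\<forall>xs. lossless_operator f xs)"

definition finitely_lossless_dynamic :: "(real^'n \<Rightarrow> real^'n) \<Rightarrow> bool" where
  "finitely_lossless_dynamic f \<longleftrightarrow> (\<forall>j. finitely_lossless_operator f (axis j 1))"

end

theory Submission
  imports Defs
begin

text \<open>If the storage functions \<open>L\<^sub>i\<close> witness losslessness of the dynamics \<open>f\<^sub>i\<close> with a common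
  shift \<open>x\<^sup>*\<close>, then \<open>\<Sum>\<^sub>i \<alpha>\<^sub>i L\<^sub>i\<close> witnesses losslessness of \<open>\<Sum>\<^sub>i \<alpha>\<^sub>i f\<^sub>i\<close>: because the weights sum
  to one, \<open>\<Sum>\<^sub>i \<alpha>\<^sub>i f\<^sub>i - x\<^sup>* = \<Sum>\<^sub>i \<alpha>\<^sub>i (f\<^sub>i - x\<^sup>*)\<close>, so the energy balance is linear in the pair
  \<open>(f\<^sub>i, L\<^sub>i)\<close>. Nonnegative weights moreover keep the combined conversion function in the
  (convex) simplex and the combined storage function bounded from below.\<close>

lemma convex_prob_simplex: "convex (prob_simplex :: (real^'n) set)"
  unfolding convex_def prob_simplex_def
  by (auto simp: sum.distrib simp flip: sum_distrib_left)

lemma conversion_function_convex_combination: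
  assumes "finite I" "(\<Sum>i\<in>I. \<alpha> i) = 1" "\<And>i. i \<in> I \<Longrightarrow> 0 \<le> \<alpha> i"
    and "\<And>i. i \<in> I \<Longrightarrow> conversion_function (f i)"
  shows "conversion_function (\<lambda>q. \<Sum>i\<in>I. \<alpha> i *\<^sub>R f i q)"
  using assms unfolding conversion_function_def by (simp add: convex_sum convex_prob_simplex)

lemma inner_affine_combination_diff:
  fixes y :: "'i \<Rightarrow> 'a::real_inner"
  assumes "(\<Sum>i\<in>I. \<alpha> i) = 1"
  shows "p \<bullet> ((\<Sum>i\<in>I. \<alpha> i *\<^sub>R y i) - c) = (\<Sum>i\<in>I. \<alpha> i * (p \<bullet> (y i - c)))"
  by (simp add: inner_sum_right inner_diff_right right_diff_distrib sum_subtractf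
      flip: sum_distrib_right add: assms)

lemma set_integrable_sum:
  fixes f :: "'i \<Rightarrow> 'a \<Rightarrow> 'b::{banach, second_countable_topology}"
  assumes "\<And>i. i \<in> I \<Longrightarrow> set_integrable M A (f i)"
  shows "set_integrable M A (\<lambda>x. \<Sum>i\<in>I. f i x)"
  using assms unfolding set_integrable_def by (simp add: scaleR_sum_right)

lemma set_integral_sum:
  fixes f :: "'i \<Rightarrow> 'a \<Rightarrow> 'b::{banach, second_countable_topology}"
  assumes "\<And>i. i \<in> I \<Longrightarrow> set_integrable M A (f i)"
  shows "(LINT x:A|M. \<Sum>i\<in>I. f i x) = (\<Sum>i\<in>I. LINT x:A|M. f i x)"
  using assms unfolding set_integrable_def set_lebesgue_integral_def
  by (simp add: scaleR_sum_right)

lemma lossless_via_affine_combination: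
  fixes f :: "'i \<Rightarrow> real^'n \<Rightarrow> real^'n"
  assumes sum1: "(\<Sum>i\<in>I. \<alpha> i) = 1"
    and lossless: "\<And>i. i \<in> I \<Longrightarrow> lossless_via (f i) xs (L i)"
  shows "lossless_via (\<lambda>q. \<Sum>i\<in>I. \<alpha> i *\<^sub>R f i q) xs (\<lambda>q. \<Sum>i\<in>I. \<alpha> i * L i q)"
  unfolding lossless_via_def
proof (intro allI impI conjI)
  fix q0 :: "real^'n" and p :: "real \<Rightarrow> real^'n" and t :: real
  assume input: "admissible_input p \<and> 0 \<le> t"
  let ?q = "state q0 p"
  let ?g = "\<lambda>i \<tau>. p \<tau> \<bullet> (f i (?q \<tau>) - xs)"
  have integrable: "set_integrable lborel {0..t} (?g i)"
    and balance: "L i (?q t) = L i q0 + (LINT \<tau>:{0..t}|lborel. ?g i \<tau>)" if "i \<in> I" for i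
    using lossless[OF that] input unfolding lossless_via_def by blast+
  have integrand: "(\<lambda>\<tau>. p \<tau> \<bullet> ((\<Sum>i\<in>I. \<alpha> i *\<^sub>R f i (?q \<tau>)) - xs))
      = (\<lambda>\<tau>. \<Sum>i\<in>I. \<alpha> i * ?g i \<tau>)"
    by (simp add: inner_affine_combination_diff[OF sum1])
  have weighted_integrable: "set_integrable lborel {0..t} (\<lambda>\<tau>. \<alpha> i * ?g i \<tau>)" if "i \<in> I" for i
    using integrable[OF that] by (rule set_integrable_mult_right)
  show "set_integrable lborel {0..t} (\<lambda>\<tau>. p \<tau> \<bullet> ((\<Sum>i\<in>I. \<alpha> i *\<^sub>R f i (?q \<tau>)) - xs))"
    unfolding integrand by (rule set_integrable_sum) (rule weighted_integrable)
  have "(LINT \<tau>:{0..t}|lborel. p \<tau> \<bullet> ((\<Sum>i\<in>I. \<alpha> i *\<^sub>R f i (?q \<tau>)) - xs))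
      = (\<Sum>i\<in>I. LINT \<tau>:{0..t}|lborel. \<alpha> i * ?g i \<tau>)"
    unfolding integrand by (rule set_integral_sum) (rule weighted_integrable)
  also have "\<dots> = (\<Sum>i\<in>I. \<alpha> i * (L i (?q t) - L i q0))"
  proof (rule sum.cong[OF refl])
    fix i assume "i \<in> I"
    then show "(LINT \<tau>:{0..t}|lborel. \<alpha> i * ?g i \<tau>) = \<alpha> i * (L i (?q t) - L i q0)"
      using balance[of i] by simp
  qed
  finally show "(\<Sum>i\<in>I. \<alpha> i * L i (?q t)) = (\<Sum>i\<in>I. \<alpha> i * L i q0) +
      (LINT \<tau>:{0..t}|lborel. p \<tau> \<bullet> ((\<Sum>i\<in>I. \<alpha> i *\<^sub>R f i (?q \<tau>)) - xs))"
    by (simp add: right_diff_distrib sum_subtractf)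
qed

lemma bdd_below_range_nonneg_combination:
  fixes L :: "'i \<Rightarrow> 'a \<Rightarrow> real"
  assumes "\<And>i. i \<in> I \<Longrightarrow> 0 \<le> \<alpha> i" "\<And>i. i \<in> I \<Longrightarrow> bdd_below (range (L i))"
  shows "bdd_below (range (\<lambda>q. \<Sum>i\<in>I. \<alpha> i * L i q))"
proof -
  have "\<forall>i\<in>I. \<exists>b. \<forall>q. b \<le> L i q"
    using assms(2) by (simp add: bdd_below_def)
  then obtain b where b: "\<forall>i\<in>I. \<forall>q. b i \<le> L i q"
    by (simp only: bchoice_iff) blast
  have "(\<Sum>i\<in>I. \<alpha> i * b i) \<le> (\<Sum>i\<in>I. \<alpha> i * L i q)" for q
    using b assms(1) by (intro sum_mono mult_left_mono) auto
  then show ?thesis by (intro bdd_belowI) blast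
qed

lemma lossless_operator_affine_combination:
  assumes "(\<Sum>i\<in>I. \<alpha> i) = 1" "\<And>i. i \<in> I \<Longrightarrow> lossless_operator (f i) xs"
  shows "lossless_operator (\<lambda>q. \<Sum>i\<in>I. \<alpha> i *\<^sub>R f i q) xs"
proof -
  have "\<forall>i\<in>I. \<exists>L. lossless_via (f i) xs L"
    using assms(2) by (simp add: lossless_operator_def)
  then obtain L where "\<forall>i\<in>I. lossless_via (f i) xs (L i)"
    by (simp only: bchoice_iff) blast
  then have "lossless_via (\<lambda>q. \<Sum>i\<in>I. \<alpha> i *\<^sub>R f i q) xs (\<lambda>q. \<Sum>i\<in>I. \<alpha> i * L i q)"
    by (intro lossless_via_affine_combination[OF assms(1)]) blast
  then show ?thesis
    by (auto simp: lossless_operator_def)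
qed

lemma finitely_lossless_operator_convex_combination:
  assumes "(\<Sum>i\<in>I. \<alpha> i) = 1" "\<And>i. i \<in> I \<Longrightarrow> 0 \<le> \<alpha> i"
    and "\<And>i. i \<in> I \<Longrightarrow> finitely_lossless_operator (f i) xs"
  shows "finitely_lossless_operator (\<lambda>q. \<Sum>i\<in>I. \<alpha> i *\<^sub>R f i q) xs"
proof -
  have "\<forall>i\<in>I. \<exists>L. bdd_below (range L) \<and> lossless_via (f i) xs L"
    using assms(3) by (simp add: finitely_lossless_operator_def)
  then obtain L where L: "\<forall>i\<in>I. bdd_below (range (L i)) \<and> lossless_via (f i) xs (L i)"
    by (simp only: bchoice_iff) blast
  have "bdd_below (range (\<lambda>q. \<Sum>i\<in>I. \<alpha> i * L i q))"
    using L by (simp add: bdd_below_range_nonneg_combination assms(2))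
  moreover have "lossless_via (\<lambda>q. \<Sum>i\<in>I. \<alpha> i *\<^sub>R f i q) xs (\<lambda>q. \<Sum>i\<in>I. \<alpha> i * L i q)"
    by (rule lossless_via_affine_combination[OF assms(1)]) (use L in blast)
  ultimately show ?thesis
    unfolding finitely_lossless_operator_def by (intro exI conjI)
qed

theorem theorem5p5:
  fixes k :: nat and f :: "nat \<Rightarrow> real^'n \<Rightarrow> real^'n" and \<alpha> :: "nat \<Rightarrow> real"
  assumes conv: "\<And>l. l < k \<Longrightarrow> conversion_function (f l)"
    and nonneg: "\<And>l. l < k \<Longrightarrow> 0 \<le> \<alpha> l"
    and sum1: "(\<Sum>l<k. \<alpha> l) = 1"
  shows "conversion_function (\<lambda>q. \<Sum>l<k. \<alpha> l *\<^sub>R f l q)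
    \<and> ((\<forall>l<k. lossless_dynamic (f l)) \<longrightarrow> lossless_dynamic (\<lambda>q. \<Sum>l<k. \<alpha> l *\<^sub>R f l q))
    \<and> ((\<forall>l<k. finitely_lossless_dynamic (f l)) \<longrightarrow>
         finitely_lossless_dynamic (\<lambda>q. \<Sum>l<k. \<alpha> l *\<^sub>R f l q))"
proof (intro conjI impI)
  show "conversion_function (\<lambda>q. \<Sum>l<k. \<alpha> l *\<^sub>R f l q)"
    using conv nonneg sum1 by (intro conversion_function_convex_combination) auto
next
  assume "\<forall>l<k. lossless_dynamic (f l)"
  then show "lossless_dynamic (\<lambda>q. \<Sum>l<k. \<alpha> l *\<^sub>R f l q)"
    unfolding lossless_dynamic_def
    by (auto intro!: lossless_operator_affine_combination[OF sum1])
next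
  assume "\<forall>l<k. finitely_lossless_dynamic (f l)"
  then show "finitely_lossless_dynamic (\<lambda>q. \<Sum>l<k. \<alpha> l *\<^sub>R f l q)"
    unfolding finitely_lossless_dynamic_def
    by (auto intro!: finitely_lossless_operator_convex_combination[OF sum1] nonneg)
qed

end
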